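(* If $f$ is a VCCR (over linear profiles) satisfying Coherent Defeat and Positive Involvement in Defeat, then $f$ refines the Split Cycle VCCR: $f(\mathbf P)\supseteq sc(\mathbf P)$ for every profile $\mathbf P$.
   Context: Profiles: functions $\mathbf P:V\to\mathcal L(X)$, where $V$ is a nonempty finite set of voters, $X$ a nonempty finite set of candidates (drawn from fixed infinite sets), and $\mathcal L(X)$ the strict linear orders on $X$; voter $i$ ranks $x$ above $y$ if $(x,y)\in\mathbf P(i)$. $\mathrm{Margin}_{\mathbf P}(x,y)$ = number of voters ranking $x$ above $y$ minus number ranking $y$ above $x$. A majority path from $x_1$ to $x_n$ is $(x_1,\dots,x_n)$ with $\mathrm{Margin}_{\mathbf P}(x_i,x_{i+1})>0$ for all $i<n$; its strength is the minimum of these margins. A VCCR assigns to each profile an asymmetric relation $f(\mathbf P)$ on the candidates. Split Cycle: $(x,y)\in sc(\mathbf P)$ iff $\mathrm{Margin}_{\mathbf P}(x,y)>0$ and it exceeds the strength of every majority path from $y$ to $x$. Coherent Defeat: if $\mathrm{Margin}_{\mathbf P}(x,y)>0$ and there is no majority path from $y$ to $x$, then $(x,y)\in f(\mathbf P)$. Positive Involvement in Defeat: if $(x,y)\notin f(\mathbf P)$ and $\mathbf P'$ is obtained by adding one new voter whose ballot ranks $y$ above $x$, then $(x,y)\notin f(\mathbf P')$. *)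

theory Defs
  imports Main
begin

text \<open>A profile with voter set V and candidate set X: every voter in V submits a strict
linear order on X (ballot (x,y) means x ranked above y); ballots of non-voters are
normalised to the empty relation, so that a profile is exactly a function V -> L(X).\<close>

definition strict_lin_order :: "'c set \<Rightarrow> ('c \<times> 'c) set \<Rightarrow> bool" where
  "strict_lin_order X r \<longleftrightarrow> r \<subseteq> X \<times> X \<and> trans r \<and> irrefl r \<and> total_on X r"

definition profile :: "'v set \<Rightarrow> 'c set \<Rightarrow> ('v \<Rightarrow> ('c \<times> 'c) set) \<Rightarrow> bool" where
  "profile V X P \<longleftrightarrow> finite V \<and> V \<noteq> {} \<and> finite X \<and> X \<noteq> {} \<and>
     (\<forall>i\<in>V. strict_lin_order X (P i)) \<and> (\<forall>i. i \<notin> V \<longrightarrow> P i = {})"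

definition margin :: "'v set \<Rightarrow> ('v \<Rightarrow> ('c \<times> 'c) set) \<Rightarrow> 'c \<Rightarrow> 'c \<Rightarrow> int" where
  "margin V P x y = int (card {i\<in>V. (x, y) \<in> P i}) - int (card {i\<in>V. (y, x) \<in> P i})"

definition majority_path :: "'v set \<Rightarrow> ('v \<Rightarrow> ('c \<times> 'c) set) \<Rightarrow> 'c list \<Rightarrow> 'c \<Rightarrow> 'c \<Rightarrow> bool" where
  "majority_path V P xs x y \<longleftrightarrow> length xs \<ge> 2 \<and> hd xs = x \<and> last xs = y \<and>
     (\<forall>k. Suc k < length xs \<longrightarrow> margin V P (xs ! k) (xs ! Suc k) > 0)"

definition path_strength :: "'v set \<Rightarrow> ('v \<Rightarrow> ('c \<times> 'c) set) \<Rightarrow> 'c list \<Rightarrow> int" where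
  "path_strength V P xs = Min {margin V P (xs ! k) (xs ! Suc k) | k. Suc k < length xs}"

definition split_cycle :: "'v set \<Rightarrow> ('v \<Rightarrow> ('c \<times> 'c) set) \<Rightarrow> ('c \<times> 'c) set" where
  "split_cycle V P = {(x, y). margin V P x y > 0 \<and>
     (\<forall>xs. majority_path V P xs y x \<longrightarrow> margin V P x y > path_strength V P xs)}"

definition vccr :: "('v set \<Rightarrow> 'c set \<Rightarrow> ('v \<Rightarrow> ('c \<times> 'c) set) \<Rightarrow> ('c \<times> 'c) set) \<Rightarrow> bool" where
  "vccr f \<longleftrightarrow> (\<forall>V X P. profile V X P \<longrightarrow> f V X P \<subseteq> X \<times> X \<and> asym (f V X P))"

definition coherent_defeat :: "('v set \<Rightarrow> 'c set \<Rightarrow> ('v \<Rightarrow> ('c \<times> 'c) set) \<Rightarrow> ('c \<times> 'c) set) \<Rightarrow> bool" where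
  "coherent_defeat f \<longleftrightarrow> (\<forall>V X P x y. profile V X P \<longrightarrow> margin V P x y > 0 \<longrightarrow>
     \<not> (\<exists>xs. majority_path V P xs y x) \<longrightarrow> (x, y) \<in> f V X P)"

definition positive_involvement_in_defeat ::
  "('v set \<Rightarrow> 'c set \<Rightarrow> ('v \<Rightarrow> ('c \<times> 'c) set) \<Rightarrow> ('c \<times> 'c) set) \<Rightarrow> bool" where
  "positive_involvement_in_defeat f \<longleftrightarrow> (\<forall>V X P x y j L. profile V X P \<longrightarrow> j \<notin> V \<longrightarrow>
     strict_lin_order X L \<longrightarrow> (y, x) \<in> L \<longrightarrow> (x, y) \<notin> f V X P \<longrightarrow>
     (x, y) \<notin> f (insert j V) X (P(j := L)))"

end

theory Submission
  imports Defs
begin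

text \<open>Let x defeat y in Split Cycle with margin n, and suppose x does not defeat y under f.
Let R be the set of candidates reachable from y along edges of margin at least n; since every
majority path from y to x is weaker than n, x is not in R. Add n - 1 voters with the ballot
that ranks the candidates outside R other than x first, then y, then x, then the rest of R.
By Positive Involvement in Defeat, x still does not defeat y. Now the margin of x over y is 1,
whereas every other edge leaving R had margin below n, hence at most n - 2 (all margins have
the parity of the number of voters), and lost n - 1, so it has become negative. So there is
no majority path from y to x, and Coherent Defeat makes x defeat y: a contradiction.\<close>

lemma strict_lin_order_asym: "strict_lin_order X L \<Longrightarrow> (a, b) \<in> L \<Longrightarrow> (b, a) \<notin> L"
  unfolding strict_lin_order_def trans_def irrefl_def by blast

lemma ex_strict_lin_order_refining:
  fixes g :: "'c \<Rightarrow> nat"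
  assumes "finite X"
  obtains L where "strict_lin_order X L"
    and "\<And>a b. a \<in> X \<Longrightarrow> b \<in> X \<Longrightarrow> g a < g b \<Longrightarrow> (a, b) \<in> L"
proof -
  obtain h :: "'c \<Rightarrow> nat" where h: "inj_on h X"
    using finite_imp_inj_to_nat_seg[OF assms] by blast
  define L where "L = {(a, b). a \<in> X \<and> b \<in> X \<and> (g a < g b \<or> g a = g b \<and> h a < h b)}"
  have "strict_lin_order X L"
    unfolding strict_lin_order_def
  proof (intro conjI)
    show "L \<subseteq> X \<times> X" "trans L" "irrefl L"
      unfolding L_def trans_def irrefl_def by auto
    show "total_on X L"
      unfolding L_def total_on_def using h by (auto simp: inj_on_def) (meson linorder_neqE_nat)
  qed
  then show thesis using that unfolding L_def by blast
qed

lemma margin_swap: "margin V P b a = - margin V P a b"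
  unfolding margin_def by simp

lemma margin_pos_imp_mem:
  assumes "profile V X P" "margin V P a b > 0"
  shows "a \<in> X" "b \<in> X" "a \<noteq> b"
proof -
  have "card {i\<in>V. (a, b) \<in> P i} > 0" using assms(2) unfolding margin_def by linarith
  then have "{i\<in>V. (a, b) \<in> P i} \<noteq> {}" by (auto simp: card_gt_0_iff)
  then obtain i where "i \<in> V" "(a, b) \<in> P i" by blast
  moreover have "strict_lin_order X (P i)" using assms(1) \<open>i \<in> V\<close> unfolding profile_def by blast
  ultimately show "a \<in> X" "b \<in> X" "a \<noteq> b" unfolding strict_lin_order_def irrefl_def by auto
qed

lemma margin_eq_card_minus:
  assumes "profile V X P" "a \<in> X" "b \<in> X" "a \<noteq> b"
  shows "margin V P a b = int (card V) - 2 * int (card {i\<in>V. (b, a) \<in> P i})"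
proof -
  let ?B = "{i\<in>V. (b, a) \<in> P i}"
  have ballots: "\<forall>i\<in>V. strict_lin_order X (P i)" and "finite V"
    using assms(1) unfolding profile_def by blast+
  have "{i\<in>V. (a, b) \<in> P i} = V - ?B"
  proof (intro equalityI subsetI)
    fix i assume "i \<in> {i\<in>V. (a, b) \<in> P i}"
    then show "i \<in> V - ?B" using ballots strict_lin_order_asym[of X "P i" a b] by auto
  next
    fix i assume i: "i \<in> V - ?B"
    then have "total_on X (P i)" using ballots unfolding strict_lin_order_def by auto
    then show "i \<in> {i\<in>V. (a, b) \<in> P i}" using i assms(2-4) unfolding total_on_def by auto
  qed
  moreover have "card ?B \<le> card V" using \<open>finite V\<close> by (intro card_mono) auto
  ultimately show ?thesis
    unfolding margin_def using \<open>finite V\<close> by (simp add: card_Diff_subset)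
qed

lemma margin_less_imp_le_minus_2:
  assumes "profile V X P" "a \<in> X" "b \<in> X" "a \<noteq> b" "c \<in> X" "d \<in> X" "c \<noteq> d"
    and "margin V P a b < margin V P c d"
  shows "margin V P a b \<le> margin V P c d - 2"
  using assms(8) margin_eq_card_minus[OF assms(1-4)] margin_eq_card_minus[OF assms(1,5-7)]
  by presburger

definition ballot_margin :: "('c \<times> 'c) set \<Rightarrow> 'c \<Rightarrow> 'c \<Rightarrow> int" where
  "ballot_margin L a b = of_bool ((a, b) \<in> L) - of_bool ((b, a) \<in> L)"

lemma ballot_margin_above: "strict_lin_order X L \<Longrightarrow> (a, b) \<in> L \<Longrightarrow> ballot_margin L a b = 1"
  and ballot_margin_below: "strict_lin_order X L \<Longrightarrow> (b, a) \<in> L \<Longrightarrow> ballot_margin L a b = -1"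
  unfolding ballot_margin_def by (auto dest: strict_lin_order_asym)

lemma profile_add_voter:
  "profile V X P \<Longrightarrow> j \<notin> V \<Longrightarrow> strict_lin_order X L \<Longrightarrow> profile (insert j V) X (P(j := L))"
  unfolding profile_def by auto

lemma card_voters_add_voter:
  assumes "finite V" "j \<notin> V"
  shows "card {i \<in> insert j V. (a, b) \<in> (P(j := L)) i}
    = card {i\<in>V. (a, b) \<in> P i} + of_bool ((a, b) \<in> L)"
proof -
  have "{i \<in> insert j V. (a, b) \<in> (P(j := L)) i}
      = (if (a, b) \<in> L then insert j else id) {i\<in>V. (a, b) \<in> P i}"
    using assms(2) by auto
  then show ?thesis using assms by simp
qed

lemma margin_add_voter:
  assumes "finite V" "j \<notin> V"
  shows "margin (insert j V) (P(j := L)) a b = margin V P a b + ballot_margin L a b"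
  unfolding margin_def ballot_margin_def card_voters_add_voter[OF assms] by simp

lemma positive_involvement_in_defeat_clones:
  fixes f :: "'v set \<Rightarrow> 'c set \<Rightarrow> ('v \<Rightarrow> ('c \<times> 'c) set) \<Rightarrow> ('c \<times> 'c) set"
  assumes "infinite (UNIV :: 'v set)" "positive_involvement_in_defeat f"
    and "profile V X P" "strict_lin_order X L" "(y, x) \<in> L" "(x, y) \<notin> f V X P"
  shows "\<exists>V' P'. profile V' X P' \<and> (x, y) \<notin> f V' X P' \<and>
    (\<forall>a b. margin V' P' a b = margin V P a b + int k * ballot_margin L a b)"
proof (induction k)
  case 0
  then show ?case using assms(3,6) by auto
next
  case (Suc k)
  then obtain V' P' where prof: "profile V' X P'" and lost: "(x, y) \<notin> f V' X P'"
    and shift: "\<forall>a b. margin V' P' a b = margin V P a b + int k * ballot_margin L a b"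
    by blast
  have "finite V'" using prof unfolding profile_def by blast
  then obtain j where j: "j \<notin> V'" using ex_new_if_finite[OF assms(1)] by blast
  have "profile (insert j V') X (P'(j := L))"
    using profile_add_voter[OF prof j assms(4)] .
  moreover have "(x, y) \<notin> f (insert j V') X (P'(j := L))"
    using assms(2,4,5) prof j lost unfolding positive_involvement_in_defeat_def by blast
  moreover have "margin (insert j V') (P'(j := L)) a b
      = margin V P a b + int (Suc k) * ballot_margin L a b" for a b
    using margin_add_voter[OF \<open>finite V'\<close> j, of P' L] shift by (simp add: algebra_simps)
  ultimately show ?case by blast
qed

lemma trancl_imp_nth_path:
  "(a, b) \<in> E\<^sup>+ \<Longrightarrow> \<exists>xs. length xs \<ge> 2 \<and> hd xs = a \<and> last xs = b \<and>
     (\<forall>k. Suc k < length xs \<longrightarrow> (xs ! k, xs ! Suc k) \<in> E)"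
proof (induction rule: converse_trancl_induct)
  case (base a)
  show ?case by (intro exI[of _ "[a, b]"]) (auto simp: less_Suc_eq base)
next
  case (step a c)
  then obtain xs where xs: "length xs \<ge> 2" "hd xs = c" "last xs = b"
    "\<forall>k. Suc k < length xs \<longrightarrow> (xs ! k, xs ! Suc k) \<in> E" by blast
  have "((a # xs) ! k, (a # xs) ! Suc k) \<in> E"
    if "Suc k < length (a # xs)" for k
    using that xs step(1) by (cases k) (auto simp: hd_conv_nth)
  then show ?case using xs by (intro exI[of _ "a # xs"]) auto
qed

lemma ex_nth_leaving:
  "xs \<noteq> [] \<Longrightarrow> hd xs \<in> R \<Longrightarrow> last xs \<notin> R \<Longrightarrow> \<exists>k. Suc k < length xs \<and> xs ! k \<in> R \<and> xs ! Suc k \<notin> R"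
proof (induction xs)
  case (Cons a xs)
  have "xs \<noteq> []" using Cons.prems by auto
  show ?case
  proof (cases "hd xs \<in> R")
    case True
    then obtain k where "Suc k < length xs" "xs ! k \<in> R" "xs ! Suc k \<notin> R"
      using Cons \<open>xs \<noteq> []\<close> by auto
    then show ?thesis by (intro exI[of _ "Suc k"]) simp
  next
    case False
    then show ?thesis using Cons.prems \<open>xs \<noteq> []\<close> by (intro exI[of _ 0]) (auto simp: hd_conv_nth)
  qed
qed simp

lemma majority_path_leaving:
  assumes "majority_path V P xs a b" "a \<in> R" "b \<notin> R"
  obtains c d where "c \<in> R" "d \<notin> R" "margin V P c d > 0"
proof -
  have "xs \<noteq> []" "hd xs \<in> R" "last xs \<notin> R"
    using assms unfolding majority_path_def by auto
  then obtain k where "Suc k < length xs" "xs ! k \<in> R" "xs ! Suc k \<notin> R"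
    using ex_nth_leaving by blast
  then show thesis using that assms(1) unfolding majority_path_def by blast
qed

lemma path_strength_ge:
  assumes "length xs \<ge> 2" "\<forall>k. Suc k < length xs \<longrightarrow> n \<le> margin V P (xs ! k) (xs ! Suc k)"
  shows "n \<le> path_strength V P xs"
proof -
  let ?S = "{margin V P (xs ! k) (xs ! Suc k) | k. Suc k < length xs}"
  have "?S \<subseteq> (\<lambda>k. margin V P (xs ! k) (xs ! Suc k)) ` {..<length xs}" by auto
  then have "finite ?S" by (rule finite_subset) simp
  moreover have "?S \<noteq> {}" using assms(1) by (auto intro!: exI[of _ 0])
  ultimately show ?thesis using assms(2) unfolding path_strength_def by (auto simp: Min_ge_iff)
qed

definition margin_graph :: "'v set \<Rightarrow> ('v \<Rightarrow> ('c \<times> 'c) set) \<Rightarrow> int \<Rightarrow> ('c \<times> 'c) set" where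
  "margin_graph V P n = {(a, b). n \<le> margin V P a b}"

lemma split_cycle_unreachable:
  assumes "(x, y) \<in> split_cycle V P"
  shows "(y, x) \<notin> (margin_graph V P (margin V P x y))\<^sup>*"
proof
  let ?n = "margin V P x y"
  assume "(y, x) \<in> (margin_graph V P ?n)\<^sup>*"
  moreover have pos: "?n > 0" using assms unfolding split_cycle_def by simp
  then have "x \<noteq> y" unfolding margin_def by auto
  ultimately have "(y, x) \<in> (margin_graph V P ?n)\<^sup>+" by (auto dest: rtranclD)
  then obtain xs where xs: "length xs \<ge> 2" "hd xs = y" "last xs = x"
    and strong: "\<forall>k. Suc k < length xs \<longrightarrow> ?n \<le> margin V P (xs ! k) (xs ! Suc k)"
    using trancl_imp_nth_path unfolding margin_graph_def by fastforce
  have "majority_path V P xs y x"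
    unfolding majority_path_def using xs strong pos by (meson less_le_trans)
  moreover have "?n \<le> path_strength V P xs" using path_strength_ge[OF xs(1) strong] .
  ultimately show False using assms unfolding split_cycle_def by fastforce
qed

lemma ex_ballot_lowering_exits:
  assumes "finite X" "x \<in> X" "y \<in> X" "x \<noteq> y" "y \<in> R" "x \<notin> R"
  obtains L where "strict_lin_order X L" "(y, x) \<in> L"
    and "\<And>a b. a \<in> X \<Longrightarrow> a \<in> R \<Longrightarrow> b \<in> X \<Longrightarrow> b \<notin> R \<Longrightarrow> (a, b) \<noteq> (y, x) \<Longrightarrow> (b, a) \<in> L"
proof -
  \<comment> \<open>a smaller value of g means a higher place on the ballot\<close>
  define g :: "_ \<Rightarrow> nat" where
    "g z = (if z = y then 1 else if z = x then 2 else if z \<in> R then 3 else 0)" for z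
  obtain L where "strict_lin_order X L" and L: "\<And>a b. a \<in> X \<Longrightarrow> b \<in> X \<Longrightarrow> g a < g b \<Longrightarrow> (a, b) \<in> L"
    using ex_strict_lin_order_refining[OF assms(1)] by blast
  moreover have "(y, x) \<in> L" using L assms(2-4) unfolding g_def by simp
  moreover have "(b, a) \<in> L" if "a \<in> X" "a \<in> R" "b \<in> X" "b \<notin> R" "(a, b) \<noteq> (y, x)" for a b
    using that assms(5,6) by (intro L) (auto simp: g_def)
  ultimately show thesis using that by blast
qed

lemma margin_leaving_reachable_le:
  assumes "profile V X P" "x \<in> X" "y \<in> X" "x \<noteq> y" "a \<in> X" "b \<in> X" "a \<noteq> b"
    and "(y, a) \<in> (margin_graph V P (margin V P x y))\<^sup>*"
    and "(y, b) \<notin> (margin_graph V P (margin V P x y))\<^sup>*"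
  shows "margin V P a b \<le> margin V P x y - 2"
proof -
  have "margin V P a b < margin V P x y"
  proof (rule ccontr)
    assume "\<not> margin V P a b < margin V P x y"
    then have "(a, b) \<in> margin_graph V P (margin V P x y)" unfolding margin_graph_def by simp
    with assms(8) have "(y, b) \<in> (margin_graph V P (margin V P x y))\<^sup>*" by (rule rtrancl_into_rtrancl)
    with assms(9) show False by contradiction
  qed
  then show ?thesis by (rule margin_less_imp_le_minus_2[OF assms(1,5-7,2-4)])
qed

lemma ex_ballot_blocking_majority_paths:
  assumes prof: "profile V X P" and sc: "(x, y) \<in> split_cycle V P"
  obtains L where "strict_lin_order X L" "(y, x) \<in> L"
    and "\<And>V' P'. profile V' X P' \<Longrightarrow>
      \<forall>a b. margin V' P' a b = margin V P a b + (margin V P x y - 1) * ballot_margin L a b \<Longrightarrow>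
      margin V' P' x y = 1 \<and> (\<nexists>xs. majority_path V' P' xs y x)"
proof -
  define n where "n = margin V P x y"
  define R where "R = (margin_graph V P n)\<^sup>* `` {y}"
  have "n > 0" using sc unfolding split_cycle_def n_def by simp
  then have "x \<in> X" "y \<in> X" "x \<noteq> y" using margin_pos_imp_mem[OF prof] n_def by auto
  have "y \<in> R" "x \<notin> R" using split_cycle_unreachable[OF sc] unfolding R_def n_def by auto
  obtain L where L: "strict_lin_order X L" "(y, x) \<in> L"
    and exits: "\<And>a b. a \<in> X \<Longrightarrow> a \<in> R \<Longrightarrow> b \<in> X \<Longrightarrow> b \<notin> R \<Longrightarrow> (a, b) \<noteq> (y, x) \<Longrightarrow> (b, a) \<in> L"
    using ex_ballot_lowering_exits prof \<open>x \<in> X\<close> \<open>y \<in> X\<close> \<open>x \<noteq> y\<close> \<open>y \<in> R\<close> \<open>x \<notin> R\<close>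
    unfolding profile_def by metis
  have "margin V' P' x y = 1 \<and> (\<nexists>xs. majority_path V' P' xs y x)"
    if prof': "profile V' X P'"
      and shift: "\<forall>a b. margin V' P' a b = margin V P a b + (n - 1) * ballot_margin L a b" for V' P'
  proof -
    have "margin V' P' x y = 1" using shift ballot_margin_below[OF L] unfolding n_def by simp
    moreover have "margin V' P' a b \<le> 0" if "a \<in> R" "b \<notin> R" for a b
    proof (rule ccontr)
      assume "\<not> margin V' P' a b \<le> 0"
      then have "margin V' P' a b > 0" by simp
      then have "a \<in> X" "b \<in> X" "a \<noteq> b" using margin_pos_imp_mem[OF prof'] by blast+
      show False
      proof (cases "(a, b) = (y, x)")
        case True
        then show False
          using \<open>margin V' P' x y = 1\<close> \<open>margin V' P' a b > 0\<close> margin_swap[of V' P' x y] by simp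
      next
        case False
        have "margin V P a b \<le> n - 2"
          using margin_leaving_reachable_le[OF prof \<open>x \<in> X\<close> \<open>y \<in> X\<close> \<open>x \<noteq> y\<close> \<open>a \<in> X\<close> \<open>b \<in> X\<close> \<open>a \<noteq> b\<close>]
            that unfolding R_def n_def by simp
        moreover have "ballot_margin L a b = -1"
          using ballot_margin_below[OF L(1) exits] \<open>a \<in> X\<close> \<open>b \<in> X\<close> that False by blast
        ultimately show False using shift \<open>margin V' P' a b > 0\<close> by simp
      qed
    qed
    ultimately show ?thesis using majority_path_leaving \<open>y \<in> R\<close> \<open>x \<notin> R\<close> by (metis not_le)
  qed
  then show thesis using that L unfolding n_def by blast
qed

theorem theorem4p5:
  fixes f :: "'v set \<Rightarrow> 'c set \<Rightarrow> ('v \<Rightarrow> ('c \<times> 'c) set) \<Rightarrow> ('c \<times> 'c) set"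
  assumes "infinite (UNIV :: 'v set)" and "infinite (UNIV :: 'c set)"
    and "vccr f" and "coherent_defeat f" and "positive_involvement_in_defeat f"
  shows "\<forall>V X P. profile V X P \<longrightarrow> split_cycle V P \<subseteq> f V X P"
proof (intro allI impI subrelI)
  fix V :: "'v set" and X :: "'c set" and P x y
  assume prof: "profile V X P" and sc: "(x, y) \<in> split_cycle V P"
  have "margin V P x y > 0" using sc unfolding split_cycle_def by simp
  obtain L where L: "strict_lin_order X L" "(y, x) \<in> L"
    and blocked: "\<And>V' :: 'v set. \<And>P'. profile V' X P' \<Longrightarrow>
      \<forall>a b. margin V' P' a b = margin V P a b + (margin V P x y - 1) * ballot_margin L a b \<Longrightarrow>
      margin V' P' x y = 1 \<and> (\<nexists>xs. majority_path V' P' xs y x)"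
    using ex_ballot_blocking_majority_paths[OF prof sc] by blast
  show "(x, y) \<in> f V X P"
  proof (rule ccontr)
    assume "(x, y) \<notin> f V X P"
    then obtain V' P' where prof': "profile V' X P'" and lost: "(x, y) \<notin> f V' X P'"
      and shift: "\<forall>a b. margin V' P' a b = margin V P a b + (margin V P x y - 1) * ballot_margin L a b"
      using positive_involvement_in_defeat_clones[OF assms(1,5) prof L, of "nat (margin V P x y - 1)"]
        \<open>margin V P x y > 0\<close> by auto
    then show False
      using blocked[OF prof' shift] assms(4) prof' unfolding coherent_defeat_def by auto
  qed
qed

end
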